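(* Let $t_{11},t_{14},t_{21},t_{22},t_{32}\in\mathbb{C}$ be constants and let $\varepsilon:L\to\bar L$ be defined by $\langle\varepsilon(x),y\rangle=\tilde\varepsilon(x,y)$, where $$\tilde\varepsilon=t_{32}\,\bar T^*\wedge\bar W^*-t_{11}\,\bar T^*\wedge\omega^*-t_{21}\,\bar T^*\wedge\rho^*-t_{22}\,\bar W^*\wedge\rho^*+t_{14}\,\omega^*\wedge\rho^*,$$ and suppose $\varepsilon$ is small enough that $L_\varepsilon=\{x+\varepsilon(x):x\in L\}$ satisfies $L_\varepsilon\cap\bar L_\varepsilon=0$ (so that $L_\varepsilon$ is a generalized complex structure). Then the type of $L_\varepsilon$ is constant on $N$ and equals $0$ (symplectic type) if $t_{14}\neq0$, and $2$ (complex type) if $t_{14}=0$.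
   Context: Let $N$ be a primary Kodaira surface (real dimension 4). As a real manifold $N$ is parallelizable: there are global real vector fields $X,Y,U,V$ forming a frame of $T_N$ whose only nonzero Lie bracket is $[X,Y]=U$, with standard complex structure $JX=Y$, $JY=-X$, $JU=V$, $JV=-U$. Put $T=\frac12(X-iY)$, $W=\frac12(U-iV)$; then $\{T,W,\bar T,\bar W\}$ is a global frame of $T_N\otimes\mathbb{C}$ whose only nonzero bracket is $[T,\bar T]=\frac i2(W+\bar W)$, and $\{\omega,\rho,\bar\omega,\bar\rho\}$ is the dual coframe. On $(T_N\oplus T_N^* )\otimes\mathbb{C}$ use the inner product $\langle X+\sigma,Y+\tau\rangle=\frac12(\sigma(Y)+\tau(X))$ and the Courant bracket $[X+\sigma,Y+\tau]=[X,Y]+\mathcal L_X\tau-\mathcal L_Y\sigma-\frac12 d(i_X\tau-i_Y\sigma)$. A generalized complex structure is a maximal isotropic, Courant-involutive subbundle $E\subset(T_N\oplus T_N^* )\otimes\mathbb{C}$ with $E\cap\bar E=0$; its type at $p\in N$ is the complex codimension of $\pi_T(E_p)$ in $T_pN\otimes\mathbb{C}$, where $\pi_T$ is the projection to the tangent part. $L$ is the subbundle spanned by $\bar T,\bar W,\omega,\rho$, $\bar L$ the one spanned by $T,W,\bar\omega,\bar\rho$, and $\{\bar T^*,\bar W^*,\omega^*,\rho^*\}$ is the frame of $L^*$ dual to $\{\bar T,\bar W,\omega,\rho\}$. Wedge products are evaluated as $(\alpha\wedge\beta)(x,y)=\alpha(x)\beta(y)-\alpha(y)\beta(x)$. (For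 these $\tilde\varepsilon$ the Maurer–Cartan equation holds, so $L_\varepsilon$ is Courant involutive.) *)

theory Defs
  imports "HOL-Analysis.Analysis" "HOL-Library.Function_Algebras"
begin

text \<open>Fibrewise model of (T_N + T_N^*) tensor C for the primary Kodaira surface.
  Since N is parallelizable with the global frame T, W, Tbar, Wbar and dual coframe
  omega, rho, omegabar, rhobar, and all data below have constant coefficients in
  this frame, every fibre is the same 8-dimensional complex vector space.
  A tangent vector is given by its coefficients w.r.t. T, W, Tbar, Wbar;
  a covector by its coefficients w.r.t. omega, rho, omegabar, rhobar
  (indexed by the tangent frame element they are dual to).\<close>

datatype fidx = fT | fW | fTb | fWb

type_synonym tvec = "fidx \<Rightarrow> complex"
type_synonym cvec = "fidx \<Rightarrow> complex"
type_synonym gvec = "tvec \<times> cvec"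

definition pairing :: "cvec \<Rightarrow> tvec \<Rightarrow> complex" where
  "pairing \<sigma> X = (\<Sum>k\<in>UNIV. \<sigma> k * X k)"

lemma UNIV_fidx: "(UNIV :: fidx set) = {fT, fW, fTb, fWb}"
  using fidx.exhaust by auto

instance fidx :: finite
  by standard (simp add: UNIV_fidx)

definition ip :: "gvec \<Rightarrow> gvec \<Rightarrow> complex" where
  "ip u v = (pairing (snd u) (fst v) + pairing (snd v) (fst u)) / 2"

definition gadd :: "gvec \<Rightarrow> gvec \<Rightarrow> gvec" where
  "gadd u v = ((\<lambda>k. fst u k + fst v k), (\<lambda>k. snd u k + snd v k))"

definition gscale :: "complex \<Rightarrow> gvec \<Rightarrow> gvec" where
  "gscale c u = ((\<lambda>k. c * fst u k), (\<lambda>k. c * snd u k))"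

definition gzero :: gvec where
  "gzero = ((\<lambda>k. 0), (\<lambda>k. 0))"

fun bar_idx :: "fidx \<Rightarrow> fidx" where
  "bar_idx fT = fTb" | "bar_idx fW = fWb" | "bar_idx fTb = fT" | "bar_idx fWb = fW"

definition gconj :: "gvec \<Rightarrow> gvec" where
  "gconj u = ((\<lambda>k. cnj (fst u (bar_idx k))), (\<lambda>k. cnj (snd u (bar_idx k))))"

definition tframe :: "fidx \<Rightarrow> gvec" where
  "tframe i = ((\<lambda>k. if k = i then 1 else 0), (\<lambda>k. 0))"
definition cframe :: "fidx \<Rightarrow> gvec" where
  "cframe i = ((\<lambda>k. 0), (\<lambda>k. if k = i then 1 else 0))"

definition Lsub :: "gvec set" where
  "Lsub = {gadd (gadd (gscale p (tframe fTb)) (gscale q (tframe fWb)))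
                (gadd (gscale r (cframe fT)) (gscale s (cframe fW))) | p q r s. True}"

definition Lbar :: "gvec set" where
  "Lbar = {gadd (gadd (gscale p (tframe fT)) (gscale q (tframe fW)))
                (gadd (gscale r (cframe fTb)) (gscale s (cframe fWb))) | p q r s. True}"

definition Tb_star :: "gvec \<Rightarrow> complex" where "Tb_star y = fst y fTb"
definition Wb_star :: "gvec \<Rightarrow> complex" where "Wb_star y = fst y fWb"
definition om_star :: "gvec \<Rightarrow> complex" where "om_star y = snd y fT"
definition rho_star :: "gvec \<Rightarrow> complex" where "rho_star y = snd y fW"

definition wedge :: "(gvec \<Rightarrow> complex) \<Rightarrow> (gvec \<Rightarrow> complex) \<Rightarrow> gvec \<Rightarrow> gvec \<Rightarrow> complex" where
  "wedge \<alpha> \<beta> x y = \<alpha> x * \<beta> y - \<alpha> y * \<beta> x"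

definition eps_tilde :: "complex \<Rightarrow> complex \<Rightarrow> complex \<Rightarrow> complex \<Rightarrow> complex \<Rightarrow> gvec \<Rightarrow> gvec \<Rightarrow> complex" where
  "eps_tilde t11 t14 t21 t22 t32 x y =
      t32 * wedge Tb_star Wb_star x y - t11 * wedge Tb_star om_star x y
    - t21 * wedge Tb_star rho_star x y - t22 * wedge Wb_star rho_star x y
    + t14 * wedge om_star rho_star x y"

definition cdim :: "tvec set \<Rightarrow> nat" where
  "cdim S = vector_space.dim (\<lambda>(c::complex) (v::tvec) k. c * v k) S"

definition gc_type :: "gvec set \<Rightarrow> nat" where
  "gc_type E = 4 - cdim (fst ` E)"

end

theory Submission imports Defs begin

(* Write x = p Tbar + q Wbar + r omega + s rho for the general element of L.  Since eps(x) lies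
   in Lbar, its tangent part is a combination of T and W, and its two coefficients are read off
   by pairing eps(x) with omega and rho, i.e. from eps_tilde(x, omega) and eps_tilde(x, rho).
   Hence the tangent projection of L_eps is the image of the explicit linear map
     (p,q,r,s) |-> -2(t11 p + t14 s) T + 2(t14 r - t21 p - t22 q) W + p Tbar + q Wbar.
   If t14 <> 0 this map is onto (solve for s and r), so the projection has dimension 4 and the
   type is 0.  If t14 = 0 its image is spanned by the images of Tbar and Wbar, which are
   linearly independent, so the projection has dimension 2 and the type is 2.
   The file first sets up complex linear algebra on tangent vectors (a dimension criterion via
   dual coordinates), then computes the tangent projection, then treats the two cases. *)

interpretation VS: vector_space "\<lambda>(c::complex) (v::tvec) k. c * v k"
  by unfold_locales (auto simp: fun_eq_iff algebra_simps)

lemma cdim_eq_VS_dim: "cdim S = VS.dim S"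
  by (simp add: cdim_def)

lemma sum_fun_apply: "(\<Sum>v\<in>S. f v) x = (\<Sum>v\<in>S. f v x)"
  for f :: "'a \<Rightarrow> 'b \<Rightarrow> 'c::comm_monoid_add"
  by (induction S rule: infinite_finite_induct) auto

lemma independent_by_coordinates:
  assumes fin: "finite B"
    and dual: "\<And>v w. v \<in> B \<Longrightarrow> w \<in> B \<Longrightarrow> w (c v) = (if w = v then 1 else 0)"
  shows "VS.independent B"
proof
  assume "VS.dependent B"
  then obtain u v where v: "v \<in> B" "u v \<noteq> 0"
    and comb: "(\<Sum>w\<in>B. (\<lambda>k. u w * w k)) = 0"
    using VS.dependent_finite[OF fin] by blast
  have "0 = (\<Sum>w\<in>B. u w * w (c v))"
    using fun_cong[OF comb, of "c v"] by (simp add: sum_fun_apply)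
  also have "\<dots> = (\<Sum>w\<in>B. if w = v then u w else 0)"
    by (intro sum.cong refl) (simp add: dual[OF v(1)])
  also have "\<dots> = u v"
    using v(1) fin by simp
  finally show False using v(2) by simp
qed

lemma dim_by_coordinates:
  assumes "finite B" "\<And>v w. v \<in> B \<Longrightarrow> w \<in> B \<Longrightarrow> w (c v) = (if w = v then 1 else 0)"
    and "B \<subseteq> V" "V \<subseteq> VS.span B"
  shows "VS.dim V = card B"
  using VS.dim_unique independent_by_coordinates assms by blast

definition ev :: "fidx \<Rightarrow> tvec" where
  "ev i = (\<lambda>k. if k = i then 1 else 0)"

lemma inj_ev: "inj ev"
  by (rule injI) (metis ev_def zero_neq_one)

lemma dim_tvec: "VS.dim (UNIV :: tvec set) = 4"
proof -
  have "VS.dim (UNIV :: tvec set) = card (range ev)"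
  proof (rule dim_by_coordinates[where c = "inv ev"])
    show "w (inv ev v) = (if w = v then 1 else 0)" if "v \<in> range ev" "w \<in> range ev" for v w
    proof -
      from that obtain i j where "v = ev i" "w = ev j" by blast
      then show ?thesis by (auto simp: inv_f_f[OF inj_ev] inj_eq[OF inj_ev]) (auto simp: ev_def)
    qed
    show "UNIV \<subseteq> VS.span (range ev)"
    proof
      fix v :: tvec
      have "v = (\<Sum>i\<in>UNIV. (\<lambda>k. v i * ev i k))"
        by (auto simp: fun_eq_iff sum_fun_apply UNIV_fidx ev_def intro: fidx.exhaust)
      also have "\<dots> \<in> VS.span (range ev)"
        by (intro VS.span_sum VS.span_scale VS.span_base) simp
      finally show "v \<in> VS.span (range ev)" .
    qed
  qed simp_all
  also have "\<dots> = 4"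
    using card_image[OF inj_ev] by (simp add: UNIV_fidx)
  finally show ?thesis .
qed

definition Lel :: "complex \<Rightarrow> complex \<Rightarrow> complex \<Rightarrow> complex \<Rightarrow> gvec" where
  "Lel p q r s = gadd (gadd (gscale p (tframe fTb)) (gscale q (tframe fWb)))
                (gadd (gscale r (cframe fT)) (gscale s (cframe fW)))"

lemma Lsub_Lel: "Lsub = {Lel p q r s | p q r s. True}"
  by (simp add: Lsub_def Lel_def)

lemma Lel_in_Lsub: "Lel p q r s \<in> Lsub"
  by (auto simp: Lsub_Lel)

lemma fst_Lel: "fst (Lel p q r s) = (\<lambda>k. case k of fTb \<Rightarrow> p | fWb \<Rightarrow> q | _ \<Rightarrow> 0)"
  by (auto simp: Lel_def gadd_def gscale_def tframe_def cframe_def fun_eq_iff split: fidx.split)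

lemma snd_Lel: "snd (Lel p q r s) = (\<lambda>k. case k of fT \<Rightarrow> r | fW \<Rightarrow> s | _ \<Rightarrow> 0)"
  by (auto simp: Lel_def gadd_def gscale_def tframe_def cframe_def fun_eq_iff split: fidx.split)

lemma ip_Lel:
  "ip e (Lel p q r s) = (snd e fTb * p + snd e fWb * q + r * fst e fT + s * fst e fW) / 2"
  by (simp add: ip_def pairing_def UNIV_fidx fst_Lel snd_Lel)

lemma eps_tilde_Lel:
  "eps_tilde t11 t14 t21 t22 t32 (Lel p q r s) (Lel p' q' r' s') =
     t32 * (p * q' - q * p') - t11 * (p * r' - r * p') - t21 * (p * s' - s * p')
   - t22 * (q * s' - s * q') + t14 * (r * s' - s * r')"
  by (simp add: algebra_simps eps_tilde_def wedge_def Tb_star_def Wb_star_def om_star_def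
      rho_star_def fst_Lel snd_Lel)

lemma Lbar_no_bar_tangent: "e \<in> Lbar \<Longrightarrow> fst e fTb = 0 \<and> fst e fWb = 0"
  by (auto simp: Lbar_def gadd_def gscale_def tframe_def cframe_def)

(* The tangent part of x + eps(x) for x = Lel p q r s. *)
definition tangent_part ::
    "complex \<Rightarrow> complex \<Rightarrow> complex \<Rightarrow> complex \<Rightarrow> complex \<Rightarrow> complex \<Rightarrow> complex \<Rightarrow> complex \<Rightarrow> tvec"
  where "tangent_part t11 t14 t21 t22 p q r s = (\<lambda>k. case k of
      fT \<Rightarrow> -2 * (t11 * p + t14 * s) | fW \<Rightarrow> 2 * (t14 * r - t21 * p - t22 * q)
    | fTb \<Rightarrow> p | fWb \<Rightarrow> q)"

(* eps(x) has no Tbar, Wbar part, and its T, W parts are eps_tilde(x, omega), eps_tilde(x, rho)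
   up to the factor 2 of the inner product. *)
lemma tangent_part_of_deformation:
  assumes eps_range: "\<forall>x\<in>Lsub. eps x \<in> Lbar"
    and eps_def: "\<forall>x\<in>Lsub. \<forall>y\<in>Lsub. ip (eps x) y = eps_tilde t11 t14 t21 t22 t32 x y"
  shows "fst (gadd (Lel p q r s) (eps (Lel p q r s))) = tangent_part t11 t14 t21 t22 p q r s"
proof -
  let ?x = "Lel p q r s"
  have no_bar: "fst (eps ?x) fTb = 0" "fst (eps ?x) fWb = 0"
    using Lbar_no_bar_tangent eps_range Lel_in_Lsub by blast+
  have "ip (eps ?x) (Lel 0 0 1 0) = eps_tilde t11 t14 t21 t22 t32 ?x (Lel 0 0 1 0)"
    using eps_def Lel_in_Lsub by blast
  then have coeff_T: "fst (eps ?x) fT = -2 * (t11 * p + t14 * s)"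
    by (simp add: ip_Lel eps_tilde_Lel field_simps)
  have "ip (eps ?x) (Lel 0 0 0 1) = eps_tilde t11 t14 t21 t22 t32 ?x (Lel 0 0 0 1)"
    using eps_def Lel_in_Lsub by blast
  then have coeff_W: "fst (eps ?x) fW = 2 * (t14 * r - t21 * p - t22 * q)"
    by (simp add: ip_Lel eps_tilde_Lel field_simps)
  show ?thesis
    using no_bar coeff_T coeff_W
    by (auto simp: gadd_def tangent_part_def fst_Lel fun_eq_iff split: fidx.split)
qed

lemma tangent_projection:
  assumes "\<forall>x\<in>Lsub. eps x \<in> Lbar"
    and "\<forall>x\<in>Lsub. \<forall>y\<in>Lsub. ip (eps x) y = eps_tilde t11 t14 t21 t22 t32 x y"
  shows "fst ` {gadd x (eps x) | x. x \<in> Lsub}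
           = {tangent_part t11 t14 t21 t22 p q r s | p q r s. True}"
proof (intro equalityI subsetI)
  note part = tangent_part_of_deformation[OF assms]
  fix v
  assume "v \<in> fst ` {gadd x (eps x) | x. x \<in> Lsub}"
  then obtain p q r s where "v = fst (gadd (Lel p q r s) (eps (Lel p q r s)))"
    unfolding Lsub_Lel by blast
  then show "v \<in> {tangent_part t11 t14 t21 t22 p q r s | p q r s. True}"
    unfolding part by blast
next
  note part = tangent_part_of_deformation[OF assms]
  fix v
  assume "v \<in> {tangent_part t11 t14 t21 t22 p q r s | p q r s. True}"
  then obtain p q r s where "v = fst (gadd (Lel p q r s) (eps (Lel p q r s)))"
    unfolding part by blast
  then show "v \<in> fst ` {gadd x (eps x) | x. x \<in> Lsub}"
    using Lel_in_Lsub by blast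
qed

lemma tangent_part_surj:
  assumes "t14 \<noteq> 0"
  shows "{tangent_part t11 t14 t21 t22 p q r s | p q r s. True} = UNIV"
proof (intro set_eqI iffI)
  fix v :: tvec
  let ?p = "v fTb" and ?q = "v fWb"
  let ?r = "(v fW / 2 + t21 * ?p + t22 * ?q) / t14" and ?s = "- (v fT / 2 + t11 * ?p) / t14"
  have "v = tangent_part t11 t14 t21 t22 ?p ?q ?r ?s"
    using assms by (auto simp: fun_eq_iff tangent_part_def field_simps split: fidx.split)
  then show "v \<in> {tangent_part t11 t14 t21 t22 p q r s | p q r s. True}"
    by blast
qed simp

(* If t14 = 0 the tangent parts form the plane spanned by the images of Tbar and Wbar,
   which have dual coordinates Tbar, Wbar. *)
lemma dim_tangent_parts_degenerate:
  "VS.dim ({tangent_part t11 0 t21 t22 p q r s | p q r s. True}) = 2"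
proof -
  let ?a = "tangent_part t11 0 t21 t22 1 0 0 0" and ?b = "tangent_part t11 0 t21 t22 0 1 0 0"
  let ?c = "\<lambda>v. if v = ?a then fTb else fWb"
  have "?a fTb \<noteq> ?b fTb"
    by (simp add: tangent_part_def)
  then have a_ne_b: "?a \<noteq> ?b"
    by metis
  have "VS.dim ({tangent_part t11 0 t21 t22 p q r s | p q r s. True}) = card {?a, ?b}"
  proof (rule dim_by_coordinates[where c = ?c])
    show "w (?c v) = (if w = v then 1 else 0)" if "v \<in> {?a, ?b}" "w \<in> {?a, ?b}" for v w
      using that a_ne_b by auto (simp_all add: tangent_part_def)
    show "{?a, ?b} \<subseteq> {tangent_part t11 0 t21 t22 p q r s | p q r s. True}"
      by blast
    show "{tangent_part t11 0 t21 t22 p q r s | p q r s. True} \<subseteq> VS.span {?a, ?b}"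
    proof clarify
      fix p q r s :: complex
      have "tangent_part t11 0 t21 t22 p q r s = (\<lambda>k. p * ?a k) + (\<lambda>k. q * ?b k)"
        by (auto simp: fun_eq_iff tangent_part_def algebra_simps split: fidx.split)
      also have "\<dots> \<in> VS.span {?a, ?b}"
        by (intro VS.span_add VS.span_scale VS.span_base) simp_all
      finally show "tangent_part t11 0 t21 t22 p q r s \<in> VS.span {?a, ?b}" .
    qed
  qed simp
  then show ?thesis
    using a_ne_b by simp
qed

theorem proposition4p11:
  fixes t11 t14 t21 t22 t32 :: complex
    and eps :: "gvec \<Rightarrow> gvec"
  assumes eps_range: "\<forall>x\<in>Lsub. eps x \<in> Lbar"
    and eps_def: "\<forall>x\<in>Lsub. \<forall>y\<in>Lsub. ip (eps x) y = eps_tilde t11 t14 t21 t22 t32 x y"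
    and small: "{gadd x (eps x) | x. x \<in> Lsub} \<inter> gconj ` {gadd x (eps x) | x. x \<in> Lsub} = {gzero}"
  shows "gc_type {gadd x (eps x) | x. x \<in> Lsub} = (if t14 \<noteq> 0 then 0 else 2)"
proof -
  have proj: "fst ` {gadd x (eps x) | x. x \<in> Lsub}
                = {tangent_part t11 t14 t21 t22 p q r s | p q r s. True}"
    using tangent_projection[OF eps_range eps_def] .
  show ?thesis
  proof (cases "t14 = 0")
    case True
    then show ?thesis
      unfolding gc_type_def proj cdim_eq_VS_dim using dim_tangent_parts_degenerate by simp
  next
    case False
    then show ?thesis
      unfolding gc_type_def proj cdim_eq_VS_dim tangent_part_surj[OF False] dim_tvec by simp
  qed
qed

end
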